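(* Let $S$ and $R$ be two nodes joined by $h$ parallel undirected unit-capacity edges, and let $0\le k\le h$. Against a $k$-edge passive adversary, every $N$-round protocol by which $S$ securely sends a message $\mathcal{W}$ to $R$ satisfies $H(\mathcal{W})\le N(h-k)$, i.e. the secrecy rate is at most $h-k$.
   Context: Each use of an edge carries one symbol of a finite field $\mathbb{F}$; entropies in units of $\log|\mathbb{F}|$. $S$ and $R$ each have private randomness ($\mathcal{K}_S$, $\mathcal{K}_R$), mutually independent and independent of $\mathcal{W}$; there is no shared randomness. In each round each undirected edge carries one symbol in one direction, and transmissions depend causally on the sender's message/randomness and previously received symbols. Decodability: $R$ recovers $\mathcal{W}$ with zero error. Secrecy: $H(\mathcal{W}\mid\mathcal{V}_{\mathcal{A}})=H(\mathcal{W})$, where a $k$-edge adversary chooses any $k$ of the edges and $\mathcal{V}_{\mathcal{A}}$ is all values sent on them during the protocol; this must hold for every choice. Secrecy rate is $H(\mathcal{W})/N$. *)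

theory Defs
  imports "HOL-Probability.Probability"
begin

text \<open>Transcript of the public channel: value on edge e in round r (None = not yet sent /
  not an edge).  Both S and R are endpoints of every edge, so each sees the whole transcript.\<close>
type_synonym 'f trans = "nat \<Rightarrow> nat \<Rightarrow> 'f option"

text \<open>Transcript of the first t rounds of a protocol on h parallel edges.
  dir r e = True means edge e carries a symbol from S to R in round r.
  fS r e w ks H : symbol S sends (function of message, S's randomness and past transcript);
  fR r e kr H   : symbol R sends (function of R's randomness and past transcript).\<close>
primrec hist :: "nat \<Rightarrow> nat \<Rightarrow> (nat \<Rightarrow> nat \<Rightarrow> bool)
    \<Rightarrow> (nat \<Rightarrow> nat \<Rightarrow> 'w \<Rightarrow> 'a \<Rightarrow> 'f trans \<Rightarrow> 'f)
    \<Rightarrow> (nat \<Rightarrow> nat \<Rightarrow> 'b \<Rightarrow> 'f trans \<Rightarrow> 'f)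
    \<Rightarrow> 'w \<Rightarrow> 'a \<Rightarrow> 'b \<Rightarrow> 'f trans" where
  "hist 0 h dir fS fR w ks kr = (\<lambda>r e. None)"
| "hist (Suc t) h dir fS fR w ks kr =
     (let H = hist t h dir fS fR w ks kr in
      (\<lambda>r e. if r = t \<and> e < h then
                 Some (if dir t e then fS t e w ks H else fR t e kr H)
              else H r e))"

definition adv_view :: "nat set \<Rightarrow> 'f trans \<Rightarrow> 'f trans" where
  "adv_view A H = (\<lambda>r e. if e \<in> A then H r e else None)"

definition ent :: "real \<Rightarrow> 'o pmf \<Rightarrow> ('o \<Rightarrow> 'x) \<Rightarrow> real" where
  "ent b M X = - (\<Sum>x\<in>X ` set_pmf M.
       measure_pmf.prob M {\<omega>. X \<omega> = x} * log b (measure_pmf.prob M {\<omega>. X \<omega> = x}))"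

definition cent :: "real \<Rightarrow> 'o pmf \<Rightarrow> ('o \<Rightarrow> 'x) \<Rightarrow> ('o \<Rightarrow> 'y) \<Rightarrow> real" where
  "cent b M X Y = ent b M (\<lambda>\<omega>. (X \<omega>, Y \<omega>)) - ent b M Y"

end

theory Submission
  imports Defs
begin

text \<open>The adversary tapping the first \<open>k\<close> edges sees \<open>V\<close>, the remaining traffic is \<open>U\<close>.
  Since the receiver's own symbols are computed from its private randomness and the public
  transcript, the transcript has a rectangle property which makes the message a function
  of the transcript, hence of \<open>(V, U)\<close>. Secrecy says the message is independent of \<open>V\<close>,
  so as in Shannon's one-time-pad bound \<open>H(W) \<le> H(U)\<close>, and \<open>U\<close> consists of
  \<open>N (h - k)\<close> field symbols.\<close>

lemma simple_function_finite_pmf: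
  "simple_function (measure_pmf (p :: 'o::finite pmf)) X"
  by (simp add: simple_function_def)

lemma information_space_measure_pmf:
  "1 < b \<Longrightarrow> information_space (measure_pmf p) b"
  by (intro information_space.intro prob_space_measure_pmf information_space_axioms.intro)

lemma ent_eq_entropy:
  fixes p :: "'o::finite pmf"
  assumes "1 < b"
  shows "ent b p X =
    prob_space.entropy (measure_pmf p) b (count_space (X ` space (measure_pmf p))) X"
proof -
  let ?P = "\<lambda>x. measure_pmf.prob p {\<omega>. X \<omega> = x}"
  have "prob_space.entropy (measure_pmf p) b (count_space (X ` space (measure_pmf p))) X
      = - (\<Sum>x\<in>range X. ?P x * log b (?P x))"
    using information_space.entropy_simple_distributed[OF information_space_measure_pmf[OF assms]
        measure_pmf.simple_distributedI[OF simple_function_finite_pmf measure_nonneg refl]]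
    by (simp add: vimage_def)
  also have "(\<Sum>x\<in>range X. ?P x * log b (?P x)) = (\<Sum>x\<in>X ` set_pmf p. ?P x * log b (?P x))"
  proof (rule sum.mono_neutral_right)
    show "\<forall>x\<in>range X - X ` set_pmf p. ?P x * log b (?P x) = 0"
    proof
      fix x assume "x \<in> range X - X ` set_pmf p"
      then have "set_pmf p \<inter> {\<omega>. X \<omega> = x} = {}" by blast
      then show "?P x * log b (?P x) = 0" by (simp add: measure_pmf_zero_iff)
    qed
  qed auto
  finally show ?thesis unfolding ent_def by simp
qed

lemma ent_cong:
  assumes "\<forall>\<omega>\<in>set_pmf p. X \<omega> = Y \<omega>"
  shows "ent b p X = ent b p Y"
proof -
  have "X ` set_pmf p = Y ` set_pmf p" using assms by force
  moreover have "measure_pmf.prob p {\<omega>. X \<omega> = x} = measure_pmf.prob p {\<omega>. Y \<omega> = x}" for x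
  proof -
    have "{\<omega>. X \<omega> = x} \<inter> set_pmf p = {\<omega>. Y \<omega> = x} \<inter> set_pmf p" using assms by auto
    then show ?thesis by (metis measure_Int_set_pmf)
  qed
  ultimately show ?thesis unfolding ent_def by simp
qed

lemma ent_comp_le:
  fixes p :: "'o::finite pmf"
  assumes "1 < b"
  shows "ent b p (\<lambda>\<omega>. f (X \<omega>)) \<le> ent b p X"
proof -
  interpret information_space "measure_pmf p" b
    by (rule information_space_measure_pmf[OF assms])
  have "ent b p (f \<circ> X) \<le> ent b p X"
    unfolding ent_eq_entropy[OF assms] by (rule entropy_data_processing[OF simple_function_finite_pmf])
  then show ?thesis by (simp add: comp_def)
qed

lemma ent_pair_le:
  fixes p :: "'o::finite pmf"
  assumes "1 < b"
  shows "ent b p (\<lambda>\<omega>. (X \<omega>, Y \<omega>)) \<le> ent b p X + ent b p Y"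
proof -
  interpret information_space "measure_pmf p" b
    by (rule information_space_measure_pmf[OF assms])
  show ?thesis
    unfolding ent_eq_entropy[OF assms] entropy_chain_rule[OF simple_function_finite_pmf simple_function_finite_pmf]
    using conditional_entropy_less_eq_entropy[OF simple_function_finite_pmf simple_function_finite_pmf, of Y X]
    by simp
qed

lemma ent_le_log_card_range:
  fixes p :: "'o::finite pmf"
  assumes "1 < b"
  shows "ent b p X \<le> log b (card (range X))"
proof -
  interpret information_space "measure_pmf p" b
    by (rule information_space_measure_pmf[OF assms])
  show ?thesis
    using entropy_le_card[OF measure_pmf.simple_distributedI[OF simple_function_finite_pmf measure_nonneg refl], of X]
    by (simp add: ent_eq_entropy[OF assms])
qed

lemma ent_le_ent_of_independent_part:
  fixes p :: "'o::finite pmf"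
  assumes "1 < b"
    and indep: "cent b p X V = ent b p X"
    and determined: "\<forall>\<omega>\<in>set_pmf p. X \<omega> = f (V \<omega>) (U \<omega>)"
  shows "ent b p X \<le> ent b p U"
proof -
  have "ent b p X = ent b p (\<lambda>\<omega>. (X \<omega>, V \<omega>)) - ent b p V"
    using indep unfolding cent_def by simp
  also have "ent b p (\<lambda>\<omega>. (X \<omega>, V \<omega>)) = ent b p (\<lambda>\<omega>. (\<lambda>(v, u). (f v u, v)) (V \<omega>, U \<omega>))"
    using determined by (intro ent_cong) simp
  also have "\<dots> \<le> ent b p (\<lambda>\<omega>. (V \<omega>, U \<omega>))"
    by (rule ent_comp_le[OF assms(1)])
  also have "\<dots> \<le> ent b p V + ent b p U"
    by (rule ent_pair_le[OF assms(1)])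
  finally show ?thesis by simp
qed

lemma card_range_trans_le:
  fixes X :: "'o \<Rightarrow> ('f::finite) trans"
  assumes "finite J" and supp: "\<And>\<omega> r e. X \<omega> r e = None \<longleftrightarrow> (r, e) \<notin> J"
  shows "card (range X) \<le> CARD('f) ^ card J"
proof -
  define emb where "emb = (\<lambda>(G :: nat \<times> nat \<Rightarrow> 'f) r e. if (r, e) \<in> J then Some (G (r, e)) else None)"
  have "X \<omega> = emb (restrict (\<lambda>(r, e). the (X \<omega> r e)) J)" for \<omega>
    using supp by (auto simp: emb_def fun_eq_iff)
  then have "range X \<subseteq> emb ` (J \<rightarrow>\<^sub>E UNIV)"
    by (metis (no_types, lifting) image_subsetI rangeE restrict_PiE_iff UNIV_I imageI)
  then have "card (range X) \<le> card (emb ` (J \<rightarrow>\<^sub>E (UNIV :: 'f set)))"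
    by (intro card_mono) (simp_all add: assms(1) finite_PiE)
  also have "\<dots> \<le> card (J \<rightarrow>\<^sub>E (UNIV :: 'f set))"
    by (rule card_image_le) (simp add: assms(1) finite_PiE)
  finally show ?thesis by (simp add: card_PiE assms(1))
qed

lemma ent_trans_le_card_support:
  fixes p :: "'o::finite pmf" and X :: "'o \<Rightarrow> ('f::finite) trans"
  assumes "1 < CARD('f)" and "finite J" and "\<And>\<omega> r e. X \<omega> r e = None \<longleftrightarrow> (r, e) \<notin> J"
  shows "ent (real CARD('f)) p X \<le> card J"
proof -
  have "ent (real CARD('f)) p X \<le> log (real CARD('f)) (card (range X))"
    using assms(1) by (intro ent_le_log_card_range) simp
  also have "\<dots> \<le> log (real CARD('f)) (real (CARD('f) ^ card J))"
    using assms card_range_trans_le[of J X] by (subst log_le_cancel_iff) (auto simp: card_gt_0_iff)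
  also have "\<dots> = card J"
    using assms(1) by (simp add: log_nat_power)
  finally show ?thesis .
qed

lemma hist_eq_None_iff:
  "hist t h dir fS fR w ks kr r e = None \<longleftrightarrow> \<not> (r < t \<and> e < h)"
  by (induction t arbitrary: r e) (auto simp: Let_def)

lemma hist_prefix:
  assumes "t \<le> N"
  shows "hist t h dir fS fR w ks kr = (\<lambda>r e. if r < t then hist N h dir fS fR w ks kr r e else None)"
proof -
  have "r < t \<Longrightarrow> hist (t + d) h dir fS fR w ks kr r e = hist t h dir fS fR w ks kr r e" for d r e
    by (induction d) (auto simp: Let_def)
  moreover obtain d where "N = t + d" using assms le_Suc_ex by blast
  ultimately show ?thesis by (auto simp: fun_eq_iff hist_eq_None_iff)
qed

text \<open>Rectangle property: the receiver's randomness enters the transcript only through the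
  receiver's own symbols, which depend on the transcript so far, so it can be exchanged
  between two executions producing the same transcript.\<close>
lemma hist_swap_receiver:
  assumes eq: "hist N h dir fS fR w ks kr = hist N h dir fS fR w' ks' kr'" and "t \<le> N"
  shows "hist t h dir fS fR w ks kr' = hist t h dir fS fR w ks kr"
  using \<open>t \<le> N\<close>
proof (induction t)
  case 0
  then show ?case by simp
next
  case (Suc t)
  then have IH: "hist t h dir fS fR w ks kr' = hist t h dir fS fR w ks kr" by simp
  have same_prefix: "hist u h dir fS fR w ks kr = hist u h dir fS fR w' ks' kr'" if "u \<le> N" for u
    using hist_prefix[OF that, of h dir fS fR w ks kr] hist_prefix[OF that, of h dir fS fR w' ks' kr']
    unfolding eq by simp
  have "fR t e kr' (hist t h dir fS fR w ks kr) = fR t e kr (hist t h dir fS fR w ks kr)"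
    if "e < h" "\<not> dir t e" for e
    using same_prefix[of t] fun_cong[OF fun_cong[OF same_prefix[of "Suc t"]], of t e] Suc.prems that
    by (simp add: Let_def)
  then show ?case
    unfolding hist.simps Let_def IH by (auto simp: fun_eq_iff)
qed

lemma decodable_message_function_of_hist:
  assumes decodable: "\<And>w ks kr. w \<in> set_pmf pW \<Longrightarrow> ks \<in> set_pmf pKS \<Longrightarrow> kr \<in> set_pmf pKR \<Longrightarrow>
      dec kr (hist N h dir fS fR w ks kr) = w"
  obtains g where "\<And>w ks kr. w \<in> set_pmf pW \<Longrightarrow> ks \<in> set_pmf pKS \<Longrightarrow> kr \<in> set_pmf pKR \<Longrightarrow>
      w = g (hist N h dir fS fR w ks kr)"
proof
  let ?T = "\<lambda>w ks kr. hist N h dir fS fR w ks kr"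
  define g where "g \<tau> = dec (SOME kr. \<exists>w ks. w \<in> set_pmf pW \<and> ks \<in> set_pmf pKS
      \<and> kr \<in> set_pmf pKR \<and> ?T w ks kr = \<tau>) \<tau>" for \<tau>
  fix w ks kr
  assume supp: "w \<in> set_pmf pW" "ks \<in> set_pmf pKS" "kr \<in> set_pmf pKR"
  define kr0 where "kr0 = (SOME kr'. \<exists>w' ks'. w' \<in> set_pmf pW \<and> ks' \<in> set_pmf pKS
      \<and> kr' \<in> set_pmf pKR \<and> ?T w' ks' kr' = ?T w ks kr)"
  have "\<exists>w' ks'. w' \<in> set_pmf pW \<and> ks' \<in> set_pmf pKS \<and> kr0 \<in> set_pmf pKR
      \<and> ?T w' ks' kr0 = ?T w ks kr"
    unfolding kr0_def by (rule someI_ex) (use supp in blast)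
  then obtain w' ks' where kr0: "kr0 \<in> set_pmf pKR" and same: "?T w' ks' kr0 = ?T w ks kr"
    by blast
  have "?T w ks kr0 = ?T w ks kr"
    using hist_swap_receiver[OF same[symmetric] order_refl] .
  moreover have "g (?T w ks kr) = dec kr0 (?T w ks kr)"
    by (simp only: g_def kr0_def)
  ultimately show "w = g (?T w ks kr)"
    using decodable[OF supp(1,2) kr0] by simp
qed

lemma adv_view_merge:
  "H = (\<lambda>r e. if e \<in> A then adv_view A H r e else adv_view (- A) H r e)"
  by (simp add: adv_view_def fun_eq_iff)

theorem mainTheorem7:
  fixes h k N :: nat
    and pW :: "'w::finite pmf" and pKS :: "'a::finite pmf" and pKR :: "'b::finite pmf"
    and dir :: "nat \<Rightarrow> nat \<Rightarrow> bool"
    and fS :: "nat \<Rightarrow> nat \<Rightarrow> 'w \<Rightarrow> 'a \<Rightarrow> ('f::{finite,field}) trans \<Rightarrow> 'f"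
    and fR :: "nat \<Rightarrow> nat \<Rightarrow> 'b \<Rightarrow> 'f trans \<Rightarrow> 'f"
    and dec :: "'b \<Rightarrow> 'f trans \<Rightarrow> 'w"
  defines "\<Omega> \<equiv> pair_pmf pW (pair_pmf pKS pKR)"
    and "b \<equiv> real (card (UNIV :: 'f set))"
    and "T \<equiv> (\<lambda>\<omega>. hist N h dir fS fR (fst \<omega>) (fst (snd \<omega>)) (snd (snd \<omega>)))"
  assumes "k \<le> h"
    and decodable: "\<forall>\<omega>\<in>set_pmf \<Omega>. dec (snd (snd \<omega>)) (T \<omega>) = fst \<omega>"
    and secure: "\<forall>A. A \<subseteq> {..<h} \<and> card A = k \<longrightarrow>
                   cent b \<Omega> fst (\<lambda>\<omega>. adv_view A (T \<omega>)) = ent b \<Omega> fst"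
  shows "ent b \<Omega> fst \<le> real N * (real h - real k)"
proof -
  have field_card: "1 < CARD('f)"
    using card_mono[of "UNIV :: 'f set" "{0, 1}"] by simp
  have set_\<Omega>: "set_pmf \<Omega> = set_pmf pW \<times> set_pmf pKS \<times> set_pmf pKR"
    by (simp add: \<Omega>_def set_pair_pmf)
  have "\<And>w ks kr. w \<in> set_pmf pW \<Longrightarrow> ks \<in> set_pmf pKS \<Longrightarrow> kr \<in> set_pmf pKR \<Longrightarrow>
      dec kr (hist N h dir fS fR w ks kr) = w"
    using decodable unfolding set_\<Omega> T_def by auto
  then obtain g where "\<And>w ks kr. w \<in> set_pmf pW \<Longrightarrow> ks \<in> set_pmf pKS \<Longrightarrow> kr \<in> set_pmf pKR \<Longrightarrow>
      w = g (hist N h dir fS fR w ks kr)"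
    using decodable_message_function_of_hist by blast
  then have g: "\<forall>\<omega>\<in>set_pmf \<Omega>. fst \<omega> = g (T \<omega>)"
    unfolding set_\<Omega> T_def by auto
  let ?A = "{..<k}"
  have indep: "cent b \<Omega> fst (\<lambda>\<omega>. adv_view ?A (T \<omega>)) = ent b \<Omega> fst"
    using secure \<open>k \<le> h\<close> by auto
  have det: "\<forall>\<omega>\<in>set_pmf \<Omega>. fst \<omega> = g (\<lambda>r e. if e \<in> ?A then adv_view ?A (T \<omega>) r e
      else adv_view (- ?A) (T \<omega>) r e)"
    using g adv_view_merge[of "T _" ?A] by simp
  have "ent b \<Omega> fst \<le> ent b \<Omega> (\<lambda>\<omega>. adv_view (- ?A) (T \<omega>))"
    by (rule ent_le_ent_of_independent_part[where f = "\<lambda>v u. g (\<lambda>r e. if e \<in> ?A then v r e else u r e)",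
          OF _ indep det]) (use field_card in \<open>simp add: b_def\<close>)
  also have "\<dots> \<le> card ({..<N} \<times> {k..<h})"
    unfolding b_def
    by (rule ent_trans_le_card_support[OF field_card])
      (auto simp: adv_view_def T_def hist_eq_None_iff)
  finally show ?thesis
    using \<open>k \<le> h\<close> by (simp add: card_cartesian_product of_nat_diff)
qed

end
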